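(* For every $n\ge3$, the function $g_n(x_1,\ldots,x_n)=x_1x_2\vee x_1x_3\vee\cdots\vee x_1x_n\vee x_2x_3\cdots x_n$ is a positive threshold function depending on all its variables, it is not linear read-once, and its specification number in $\mathcal{H}_n$ is $\sigma_{\mathcal{H}_n}(g_n)=2n$.
   Context: $f$ on $\{0,1\}^n$ is positive if $f(\mathbf{x})=1$ and $\mathbf{x}\le\mathbf{y}$ coordinatewise imply $f(\mathbf{y})=1$. $f$ is a threshold function if there are $w_1,\ldots,w_n,t\in\mathbb{R}$ with $f(\mathbf{x})=0\iff\sum_i w_ix_i\le t$. $\mathcal{H}_n$ is the class of threshold functions of $n$ variables. A set $S\subseteq\{0,1\}^n$ specifies $f\in\mathcal{H}_n$ if $f$ is the only function in $\mathcal{H}_n$ agreeing with $f$ on $S$; $\sigma_{\mathcal{H}_n}(f)$ is the minimum size of such a set. Linear read-once (lro): constant or representable by a nested formula (literals are nested; $x\vee t$, $x\wedge t$, $\overline{x}\vee t$, $\overline{x}\wedge t$ are nested when $t$ is nested and contains neither $x$ nor $\overline{x}$). *)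

theory Defs
  imports Main "HOL-Library.Extended_Real"
begin

text \<open>Points of the cube {0,1}^n are Boolean lists of length n; variable x_(i+1)
  of the paper is the list entry at index i. A Boolean function of n variables
  is any f :: bool list => bool, only its values on the cube matter.\<close>

definition cube :: "nat \<Rightarrow> bool list set" where
  "cube n = {x. length x = n}"

definition positive_fn :: "nat \<Rightarrow> (bool list \<Rightarrow> bool) \<Rightarrow> bool" where
  "positive_fn n f \<longleftrightarrow>
     (\<forall>x\<in>cube n. \<forall>y\<in>cube n. f x \<and> (\<forall>i<n. x ! i \<longrightarrow> y ! i) \<longrightarrow> f y)"

definition threshold_fn :: "nat \<Rightarrow> (bool list \<Rightarrow> bool) \<Rightarrow> bool" where
  "threshold_fn n f \<longleftrightarrow>
     (\<exists>(w :: nat \<Rightarrow> real) (t :: real). \<forall>x\<in>cube n.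
        (\<not> f x \<longleftrightarrow> (\<Sum>i<n. w i * (if x ! i then 1 else 0)) \<le> t))"

definition H :: "nat \<Rightarrow> (bool list \<Rightarrow> bool) set" where
  "H n = {f. threshold_fn n f}"

definition specifies :: "nat \<Rightarrow> bool list set \<Rightarrow> (bool list \<Rightarrow> bool) \<Rightarrow> bool" where
  "specifies n S f \<longleftrightarrow> S \<subseteq> cube n \<and> f \<in> H n \<and>
     (\<forall>g\<in>H n. (\<forall>x\<in>S. g x = f x) \<longrightarrow> (\<forall>x\<in>cube n. g x = f x))"

definition spec_number :: "nat \<Rightarrow> (bool list \<Rightarrow> bool) \<Rightarrow> nat" where
  "spec_number n f = (LEAST k. \<exists>S. specifies n S f \<and> card S = k)"

definition depends_on_all :: "nat \<Rightarrow> (bool list \<Rightarrow> bool) \<Rightarrow> bool" where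
  "depends_on_all n f \<longleftrightarrow>
     (\<forall>i<n. \<exists>x\<in>cube n. f x \<noteq> f (x[i := \<not> x ! i]))"

text \<open>Nested formulas. A literal is (i, b): variable i if b, its negation if not b.
  NOr i b t = (literal) \<or> t, NAnd i b t = (literal) \<and> t.\<close>
datatype nformula = NLit nat bool | NOr nat bool nformula | NAnd nat bool nformula

fun nvars :: "nformula \<Rightarrow> nat set" where
  "nvars (NLit i b) = {i}"
| "nvars (NOr i b t) = insert i (nvars t)"
| "nvars (NAnd i b t) = insert i (nvars t)"

fun nested :: "nformula \<Rightarrow> bool" where
  "nested (NLit i b) = True"
| "nested (NOr i b t) = (nested t \<and> i \<notin> nvars t)"
| "nested (NAnd i b t) = (nested t \<and> i \<notin> nvars t)"

fun neval :: "nformula \<Rightarrow> bool list \<Rightarrow> bool" where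
  "neval (NLit i b) x = (x ! i = b)"
| "neval (NOr i b t) x = ((x ! i = b) \<or> neval t x)"
| "neval (NAnd i b t) x = ((x ! i = b) \<and> neval t x)"

definition lro :: "nat \<Rightarrow> (bool list \<Rightarrow> bool) \<Rightarrow> bool" where
  "lro n f \<longleftrightarrow>
     (\<exists>c. \<forall>x\<in>cube n. f x = c) \<or>
     (\<exists>\<phi>. nested \<phi> \<and> nvars \<phi> \<subseteq> {..<n} \<and> (\<forall>x\<in>cube n. f x = neval \<phi> x))"

definition g :: "nat \<Rightarrow> bool list \<Rightarrow> bool" where
  "g n x \<longleftrightarrow> (\<exists>j\<in>{1..<n}. x ! 0 \<and> x ! j) \<or> (\<forall>j\<in>{1..<n}. x ! j)"

end

theory Submission
  imports Defs
begin

text \<open>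
  Identify a point of the cube with its support. Then g_n is the threshold function with
  weight n - 2 on x_1, weight 1 on the other variables and threshold n - 2. Its minimal true
  points {x_1, x_j} and {x_2, ..., x_n} and its maximal false points {x_1} and
  {x_2, ..., x_n} - {x_j} are 2n points. They specify g_n: a threshold function agreeing with
  g_n on them has positive weights on x_2, ..., x_n, so monotonicity in these variables
  propagates the agreement to the whole cube. Conversely each of them is essential: flipping
  the value of g_n at it yields again a threshold function (explicit weights are given
  below), so every specifying set contains all of them. Finally, every nested formula has a
  literal whose value fixes the whole formula, whereas g_n is constant on no face x_i = b;
  hence g_n is not linear read-once.
\<close>

definition support :: "bool list \<Rightarrow> nat set" where
  "support x = {i. i < length x \<and> x ! i}"

definition point :: "nat \<Rightarrow> nat set \<Rightarrow> bool list" where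
  "point n A = map (\<lambda>i. i \<in> A) [0..<n]"

definition flip_at :: "(bool list \<Rightarrow> bool) \<Rightarrow> bool list \<Rightarrow> bool list \<Rightarrow> bool" where
  "flip_at f p x \<longleftrightarrow> f x \<noteq> (x = p)"

lemma length_point [simp]: "length (point n A) = n"
  by (simp add: point_def)

lemma nth_point [simp]: "i < n \<Longrightarrow> point n A ! i = (i \<in> A)"
  by (simp add: point_def)

lemma point_in_cube [simp]: "point n A \<in> cube n"
  by (simp add: cube_def)

lemma support_point [simp]: "support (point n A) = A \<inter> {..<n}"
  by (auto simp: support_def)

lemma support_subset: "x \<in> cube n \<Longrightarrow> support x \<subseteq> {..<n}"
  by (auto simp: support_def cube_def)

lemma point_support: "x \<in> cube n \<Longrightarrow> point n (support x) = x"
  by (auto simp: cube_def support_def intro: nth_equalityI)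

lemma point_eq_iff: "point n A = point n B \<longleftrightarrow> A \<inter> {..<n} = B \<inter> {..<n}"
  by (metis point_support point_in_cube support_point)

lemma update_point: "i < n \<Longrightarrow> (point n A)[i := b] = point n (if b then insert i A else A - {i})"
  by (rule nth_equalityI) (auto simp: nth_list_update)

lemma finite_cube: "finite (cube n)"
  using finite_lists_length_eq[of "UNIV :: bool set" n] by (simp add: cube_def)

lemma threshold_fn_iff_support:
  "threshold_fn n f \<longleftrightarrow> (\<exists>(w :: nat \<Rightarrow> real) t. \<forall>x\<in>cube n. f x \<longleftrightarrow> t < sum w (support x))"
proof -
  have "(\<Sum>i<n. w i * (if x ! i then 1 else 0)) = sum w (support x)"
    if "x \<in> cube n" for x and w :: "nat \<Rightarrow> real"
  proof -
    have "(\<Sum>i<n. w i * (if x ! i then 1 else 0)) = (\<Sum>i<n. if x ! i then w i else 0)"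
      by (rule sum.cong) auto
    also have "\<dots> = sum w {i \<in> {..<n}. x ! i}"
      by (simp add: sum.inter_filter[symmetric])
    finally show ?thesis
      using that by (simp add: cube_def support_def)
  qed
  moreover have "(\<not> f x \<longleftrightarrow> s \<le> t) \<longleftrightarrow> (f x \<longleftrightarrow> t < s)" for x and s t :: real
    by auto
  ultimately show ?thesis
    unfolding threshold_fn_def by simp
qed

lemma specifying_set_contains_essential_point:
  assumes "specifies n S f" "p \<in> cube n" "threshold_fn n (flip_at f p)"
  shows "p \<in> S"
proof (rule ccontr)
  assume "p \<notin> S"
  then have "\<forall>x\<in>S. flip_at f p x = f x"
    by (auto simp: flip_at_def)
  moreover have "flip_at f p \<in> H n"
    using assms(3) by (simp add: H_def)
  ultimately have "flip_at f p p = f p"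
    using assms(1,2) unfolding specifies_def by blast
  then show False
    by (simp add: flip_at_def)
qed

lemma spec_number_eqI:
  assumes "specifies n S_0 f" and "\<And>S. specifies n S f \<Longrightarrow> S_0 \<subseteq> S"
  shows "spec_number n f = card S_0"
  unfolding spec_number_def
proof (rule Least_equality)
  show "\<exists>S. specifies n S f \<and> card S = card S_0"
    using assms(1) by blast
next
  fix k assume "\<exists>S. specifies n S f \<and> card S = k"
  then obtain S where "specifies n S f" "card S = k" by blast
  moreover have "finite S"
    using \<open>specifies n S f\<close> finite_cube unfolding specifies_def by (blast intro: finite_subset)
  ultimately show "card S_0 \<le> k"
    using assms(2) by (blast intro: card_mono)
qed

lemma neval_fixed_by_literal: "\<exists>i\<in>nvars \<phi>. \<exists>b c. \<forall>x. x ! i = b \<longrightarrow> neval \<phi> x = c"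
proof (cases \<phi>)
  case (NAnd i b t)
  then show ?thesis by (intro bexI[of _ i] exI[of _ "\<not> b"] exI[of _ False]) auto
qed auto

lemma not_lro_if_nonconstant_on_faces:
  assumes "0 < n"
    and nonconst: "\<And>i b. i < n \<Longrightarrow> \<exists>x\<in>cube n. \<exists>y\<in>cube n. x ! i = b \<and> y ! i = b \<and> f x \<noteq> f y"
  shows "\<not> lro n f"
proof
  assume "lro n f"
  then consider (const) c where "\<forall>x\<in>cube n. f x = c"
    | (formula) \<phi> where "nvars \<phi> \<subseteq> {..<n}" "\<forall>x\<in>cube n. f x = neval \<phi> x"
    unfolding lro_def by blast
  then show False
  proof cases
    case const
    then show False using nonconst[OF \<open>0 < n\<close>] by metis
  next
    case formula
    obtain i b c where "i \<in> nvars \<phi>" and fixed: "\<forall>x. x ! i = b \<longrightarrow> neval \<phi> x = c"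
      using neval_fixed_by_literal by blast
    then have "i < n" using formula(1) by auto
    then show False using nonconst formula(2) fixed by metis
  qed
qed

lemma tail_not_subset_singleton: "3 \<le> n \<Longrightarrow> \<not> {1..<n::nat} \<subseteq> {k}"
proof
  assume "3 \<le> n" and sub: "{1..<n} \<subseteq> {k}"
  then have "1 \<in> {1..<n}" "2 \<in> {1..<n}" by auto
  then have "1 = k" "2 = k" using sub by blast+
  then show False by simp
qed

definition others :: "nat \<Rightarrow> nat \<Rightarrow> nat set" where
  "others n j = {1..<n} - {j}"

definition g_set :: "nat \<Rightarrow> nat set \<Rightarrow> bool" where
  "g_set n S \<longleftrightarrow> (0 \<in> S \<and> S \<inter> {1..<n} \<noteq> {}) \<or> {1..<n} \<subseteq> S"

text \<open>
  Relative to a variable x_j other than x_1, g depends only on x_1, x_j and the number of the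
  remaining variables that are set; so do its flips at points whose remaining variables are all
  equal. All of these are linear in that profile, with weight 1 on each remaining variable.
\<close>

definition profile :: "nat \<Rightarrow> nat \<Rightarrow> nat set \<Rightarrow> bool \<times> bool \<times> nat" where
  "profile n j S = (0 \<in> S, j \<in> S, card (S \<inter> others n j))"

definition g_profile :: "nat \<Rightarrow> bool \<times> bool \<times> nat \<Rightarrow> bool" where
  "g_profile n = (\<lambda>(p, q, m). (p \<and> (q \<or> 1 \<le> m)) \<or> (q \<and> m = n - 2))"

lemma g_eq_g_set: "x \<in> cube n \<Longrightarrow> g n x = g_set n (support x)"
  by (auto simp: g_def g_set_def support_def cube_def)

lemma g_point: "g n (point n A) = g_set n (A \<inter> {..<n})"
  by (simp add: g_eq_g_set)

lemma positive_fn_g: "positive_fn n (g n)"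
proof -
  have "support x \<subseteq> support y" if "x \<in> cube n" "y \<in> cube n" "\<forall>i<n. x ! i \<longrightarrow> y ! i" for x y
    using that by (auto simp: support_def cube_def)
  moreover have "g_set n S \<Longrightarrow> S \<subseteq> T \<Longrightarrow> g_set n T" for S T
    by (auto simp: g_set_def)
  ultimately show ?thesis
    unfolding positive_fn_def by (metis g_eq_g_set)
qed

lemma others_split: "j \<in> {1..<n} \<Longrightarrow> {..<n} = insert 0 (insert j (others n j))"
  by (auto simp: others_def)

lemma card_others: "j \<in> {1..<n} \<Longrightarrow> card (others n j) = n - 2"
  by (auto simp: others_def card_Diff_singleton)

lemma card_inter_others_le: "j \<in> {1..<n} \<Longrightarrow> card (S \<inter> others n j) \<le> n - 2"
  by (metis card_others card_mono finite_Diff finite_atLeastLessThan others_def inf_le2)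

lemma card_inter_others_eq_full:
  "j \<in> {1..<n} \<Longrightarrow> card (S \<inter> others n j) = n - 2 \<longleftrightarrow> others n j \<subseteq> S"
  by (metis card_others card_subset_eq finite_Diff finite_atLeastLessThan inf.absorb_iff2
      inf.orderE inf_le2 others_def)

lemma g_set_eq_g_profile:
  assumes "j \<in> {1..<n}"
  shows "g_set n S = g_profile n (profile n j S)"
proof -
  have "{1..<n} = insert j (others n j)"
    using assms by (auto simp: others_def)
  moreover have "card (S \<inter> others n j) \<ge> 1 \<longleftrightarrow> S \<inter> others n j \<noteq> {}"
    by (simp add: others_def Suc_le_eq card_gt_0_iff)
  ultimately show ?thesis
    using card_inter_others_eq_full[OF assms, of S]
    by (auto simp: g_set_def g_profile_def profile_def)
qed

lemma sum_weights_profile: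
  assumes "j \<in> {1..<n}" "S \<subseteq> {..<n}"
  shows "sum (\<lambda>i. if i = 0 then a else if i = j then c else 1) S
       = a * of_bool (0 \<in> S) + c * of_bool (j \<in> S) + real (card (S \<inter> others n j))"
proof -
  have S: "S = (S \<inter> {0}) \<union> (S \<inter> {j}) \<union> (S \<inter> others n j)"
    using assms others_split[OF assms(1)] by blast
  have "sum (\<lambda>i. if i = 0 then a else if i = j then c else 1) (S \<inter> others n j)
      = real (card (S \<inter> others n j))"
    by (simp add: others_def)
  then show ?thesis
    using assms by (subst S, subst sum.union_disjoint, auto simp: others_def sum.union_disjoint
        Int_insert_right)
qed

lemma threshold_fn_of_profile:
  assumes j: "j \<in> {1..<n}"
    and f: "\<And>S. S \<subseteq> {..<n} \<Longrightarrow> f (point n S) = P (profile n j S)"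
    and linear: "\<And>p q m. m \<le> n - 2 \<Longrightarrow>
                   P (p, q, m) \<longleftrightarrow> t < a * of_bool p + c * of_bool q + real m"
  shows "threshold_fn n f"
  unfolding threshold_fn_iff_support
proof (intro exI ballI)
  fix x assume x: "x \<in> cube n"
  have S: "support x \<subseteq> {..<n}"
    using x by (rule support_subset)
  have "f x = P (profile n j (support x))"
    using f[OF S] point_support[OF x] by simp
  also have "\<dots> \<longleftrightarrow> t < sum (\<lambda>i. if i = 0 then a else if i = j then c else 1) (support x)"
    unfolding profile_def sum_weights_profile[OF j S] using linear card_inter_others_le[OF j] by blast
  finally show "f x \<longleftrightarrow> t < sum (\<lambda>i. if i = 0 then a else if i = j then c else 1) (support x)" .
qed

lemma flip_at_point:
  "A \<subseteq> {..<n} \<Longrightarrow> S \<subseteq> {..<n} \<Longrightarrow> flip_at f (point n A) (point n S) \<longleftrightarrow> f (point n S) \<noteq> (S = A)"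
  by (simp add: flip_at_def point_eq_iff Int_absorb2)

lemma profile_eq_iff:
  assumes "j \<in> {1..<n}" "S \<subseteq> {..<n}" "A \<subseteq> {..<n}"
    and extreme: "A \<inter> others n j = {} \<or> others n j \<subseteq> A"
  shows "profile n j S = profile n j A \<longleftrightarrow> S = A"
proof
  assume eq: "profile n j S = profile n j A"
  then have card_eq: "card (S \<inter> others n j) = card (A \<inter> others n j)"
    by (simp add: profile_def)
  have "S \<inter> others n j = A \<inter> others n j"
    using extreme
  proof
    assume "A \<inter> others n j = {}"
    then show ?thesis
      using card_eq by (simp add: others_def)
  next
    assume "others n j \<subseteq> A"
    then show ?thesis
      using card_eq card_inter_others_eq_full[OF assms(1)] by (metis inf.absorb2)
  qed
  then show "S = A"
    using eq assms(2,3) others_split[OF assms(1)] by (auto simp: profile_def)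
qed simp

lemma threshold_fn_flip_g:
  assumes j: "j \<in> {1..<n}" and A: "A \<subseteq> {..<n}" "A \<inter> others n j = {} \<or> others n j \<subseteq> A"
    and linear: "\<And>p q m. m \<le> n - 2 \<Longrightarrow>
       g_profile n (p, q, m) \<noteq> ((p, q, m) = profile n j A) \<longleftrightarrow> t < a * of_bool p + c * of_bool q + real m"
  shows "threshold_fn n (flip_at (g n) (point n A))"
proof (rule threshold_fn_of_profile[OF j _ linear])
  fix S assume "S \<subseteq> {..<n}"
  then show "flip_at (g n) (point n A) (point n S)
          = (g_profile n (profile n j S) \<noteq> (profile n j S = profile n j A))"
    using A j by (simp add: flip_at_point profile_eq_iff g_point Int_absorb2 g_set_eq_g_profile)
qed

lemma g_profile_linear:
  "3 \<le> n \<Longrightarrow> m \<le> n - 2 \<Longrightarrow>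
   g_profile n (p, q, m) \<longleftrightarrow> real n - 2 < (real n - 2) * of_bool p + of_bool q + real m"
  by (cases p; cases q) (auto simp: g_profile_def)

lemma threshold_fn_g: "3 \<le> n \<Longrightarrow> threshold_fn n (g n)"
  by (rule threshold_fn_of_profile[where j = 1 and P = "g_profile n"
        and a = "real n - 2" and c = 1 and t = "real n - 2"])
    (auto simp: g_point Int_absorb2 g_set_eq_g_profile[of 1] g_profile_linear)

text \<open>Supports of the minimal true and maximal false points of g (index 0 is x_1).\<close>

definition g_essential_sets :: "nat \<Rightarrow> nat set set" where
  "g_essential_sets n = (\<lambda>j. {0, j}) ` {1..<n} \<union> others n ` {1..<n} \<union> {{1..<n}, {0}}"

lemma threshold_fn_flip_g_essential:
  assumes "3 \<le> n" "A \<in> g_essential_sets n"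
  shows "threshold_fn n (flip_at (g n) (point n A))"
proof -
  from assms(2) consider (pair) j where "j \<in> {1..<n}" "A = {0, j}"
    | (others) j where "j \<in> {1..<n}" "A = others n j" | (tail) "A = {1..<n}" | (head) "A = {0}"
    unfolding g_essential_sets_def by blast
  then show ?thesis
  proof cases
    case pair
    then show ?thesis
      by (intro threshold_fn_flip_g[where a = "real n - 5/2" and c = "1/2" and t = "real n - 2"])
        (use assms(1) in \<open>auto simp: others_def profile_def g_profile_def\<close>)
  next
    case others
    have "profile n j (others n j) = (False, False, n - 2)"
      using others(1) by (simp add: profile_def card_others) (simp add: others_def)
    with others show ?thesis
      by (intro threshold_fn_flip_g[where a = "real n - 5/2" and c = "1/2" and t = "real n - 5/2"])
        (use assms(1) in \<open>auto simp: others_def profile_def g_profile_def card_others\<close>)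
  next
    case tail
    have "profile n 1 {1..<n} = (False, True, n - 2)"
      using card_others[of 1 n] assms(1) by (simp add: profile_def others_def Int_absorb1)
    with tail show ?thesis
      by (intro threshold_fn_flip_g[where j = 1 and a = "real n - 1" and c = 1 and t = "real n - 1"])
        (use assms(1) in \<open>auto simp: others_def profile_def g_profile_def\<close>)
  next
    case head
    then show ?thesis
      by (intro threshold_fn_flip_g[where j = 1 and a = "real n - 1" and c = 1 and t = "real n - 2"])
        (use assms(1) in \<open>auto simp: others_def profile_def g_profile_def\<close>)
  qed
qed

lemma g_essential_sets_subset: "A \<in> g_essential_sets n \<Longrightarrow> 0 < n \<Longrightarrow> A \<subseteq> {..<n}"
  by (auto simp: g_essential_sets_def others_def)

lemma card_g_essential_sets:
  assumes "3 \<le> n"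
  shows "card (g_essential_sets n) = 2 * n"
proof -
  let ?J = "{1..<n}"
  let ?with0 = "insert {0} ((\<lambda>j. {0, j}) ` ?J)" and ?without0 = "insert ?J (others n ` ?J)"
  have "inj_on (\<lambda>j. {0, j}) ?J"
  proof (rule inj_onI)
    fix a b assume "a \<in> ?J" and eq: "{0, a} = {0, b}"
    have "a \<in> {0, b}" using eq by blast
    then show "a = b" using \<open>a \<in> ?J\<close> by auto
  qed
  moreover have "inj_on (others n) ?J"
  proof (rule inj_onI)
    fix a b assume "a \<in> ?J" "others n a = others n b"
    then show "a = b" unfolding others_def by blast
  qed
  moreover have "{0} \<notin> (\<lambda>j. {0, j}) ` ?J"
  proof
    assume "{0} \<in> (\<lambda>j. {0, j}) ` ?J"
    then obtain j where "j \<in> ?J" "{0} = {0, j}" by blast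
    then have "j \<in> {0}" "j \<noteq> 0" by auto
    then show False by blast
  qed
  moreover have "?J \<notin> others n ` ?J"
  proof
    assume "?J \<in> others n ` ?J"
    then obtain j where "j \<in> ?J" "?J = others n j" by blast
    then have "j \<in> others n j" by (metis)
    then show False by (simp add: others_def)
  qed
  ultimately have card_with0: "card ?with0 = n" and card_without0: "card ?without0 = n"
    using assms by (simp_all add: card_image)
  have disjoint: "?with0 \<inter> ?without0 = {}"
  proof -
    have "\<forall>A\<in>?with0. 0 \<in> A" "\<forall>A\<in>?without0. 0 \<notin> A"
      by (auto simp: others_def)
    then show ?thesis by blast
  qed
  have "g_essential_sets n = ?with0 \<union> ?without0"
    unfolding g_essential_sets_def by blast
  also have "card \<dots> = card ?with0 + card ?without0"
    by (rule card_Un_disjoint[OF _ _ disjoint]) auto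
  finally show ?thesis
    using card_with0 card_without0 by simp
qed

lemma g_set_iff_sum_if_agree_on_essential:
  fixes w :: "nat \<Rightarrow> real"
  assumes n: "3 \<le> n"
    and agree: "\<And>A. A \<in> g_essential_sets n \<Longrightarrow> g_set n A \<longleftrightarrow> t < sum w A"
    and S: "S \<subseteq> {..<n}"
  shows "g_set n S \<longleftrightarrow> t < sum w S"
proof -
  let ?J = "{1..<n}"
  have pair: "t < w 0 + w j" if "j \<in> ?J" for j
    using agree[of "{0, j}"] that by (auto simp: g_essential_sets_def g_set_def)
  have head: "w 0 \<le> t"
    using agree[of "{0}"] tail_not_subset_singleton[OF n] by (auto simp: g_essential_sets_def g_set_def)
  have tail: "t < sum w ?J"
    using agree[of ?J] by (auto simp: g_essential_sets_def g_set_def)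
  have others: "sum w (others n j) \<le> t" if "j \<in> ?J" for j
    using agree[of "others n j"] that by (auto simp: g_essential_sets_def g_set_def others_def)
  have pos: "0 < w j" if "j \<in> ?J" for j
    using pair[OF that] head by simp
  have mono: "sum w A \<le> sum w B" if "A \<subseteq> B" "B - A \<subseteq> ?J" "B \<subseteq> {..<n}" for A B
  proof (rule sum_mono2)
    show "finite B" using that(3) finite_subset by blast
    show "0 \<le> w b" if "b \<in> B - A" for b
      using pos \<open>B - A \<subseteq> ?J\<close> that by (simp add: less_imp_le subset_iff)
  qed (use that in blast)
  have S_nonzero: "S - {0} \<subseteq> ?J"
    using S by (auto simp: Suc_le_eq)
  show ?thesis
  proof (cases "0 \<in> S")
    case True
    show ?thesis
    proof (cases "S \<inter> ?J = {}")
      case True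
      then have "S = {0}" using \<open>0 \<in> S\<close> S by (auto simp: disjoint_iff)
      then show ?thesis using head tail_not_subset_singleton[OF n] by (simp add: g_set_def)
    next
      case False
      then obtain j where j: "j \<in> S" "j \<in> ?J" by blast
      have "sum w {0, j} \<le> sum w S"
        using j \<open>0 \<in> S\<close> S by (intro mono) auto
      then show ?thesis using pair[OF j(2)] j \<open>0 \<in> S\<close> by (auto simp: g_set_def)
    qed
  next
    case False
    show ?thesis
    proof (cases "?J \<subseteq> S")
      case True
      then have "S = ?J" using \<open>0 \<notin> S\<close> S_nonzero by blast
      then show ?thesis using tail by (simp add: g_set_def)
    next
      case False
      then obtain k where k: "k \<in> ?J" "k \<notin> S" by blast
      have "S \<subseteq> others n k"
        using k \<open>0 \<notin> S\<close> S_nonzero by (auto simp: others_def)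
      then have "sum w S \<le> sum w (others n k)"
        by (intro mono) (auto simp: others_def)
      then show ?thesis using others[OF k(1)] False \<open>0 \<notin> S\<close> by (auto simp: g_set_def)
    qed
  qed
qed

lemma specifies_g_essential_points:
  assumes n: "3 \<le> n"
  shows "specifies n (point n ` g_essential_sets n) (g n)"
  unfolding specifies_def
proof (intro conjI ballI impI)
  show "point n ` g_essential_sets n \<subseteq> cube n"
    by (simp add: image_subset_iff)
  show "g n \<in> H n"
    using threshold_fn_g[OF n] by (simp add: H_def)
  fix h x assume "h \<in> H n" and agree: "\<forall>y\<in>point n ` g_essential_sets n. h y = g n y"
    and x: "x \<in> cube n"
  obtain w :: "nat \<Rightarrow> real" and t where wt: "\<forall>y\<in>cube n. h y \<longleftrightarrow> t < sum w (support y)"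
    using \<open>h \<in> H n\<close> unfolding H_def threshold_fn_iff_support by blast
  have "g_set n A \<longleftrightarrow> t < sum w A" if "A \<in> g_essential_sets n" for A
  proof -
    have "A \<subseteq> {..<n}"
      using g_essential_sets_subset[OF that] n by simp
    then have "g n (point n A) = g_set n A" "support (point n A) = A"
      by (simp_all add: g_point Int_absorb2)
    moreover have "h (point n A) = g n (point n A)"
      using agree that by blast
    ultimately show ?thesis
      using wt point_in_cube by metis
  qed
  moreover have "support x \<subseteq> {..<n}"
    using x by (rule support_subset)
  ultimately have "g_set n (support x) \<longleftrightarrow> t < sum w (support x)"
    by (rule g_set_iff_sum_if_agree_on_essential[OF n])
  then show "h x = g n x"
    using wt x by (simp add: g_eq_g_set)
qed

lemma spec_number_g:
  assumes "3 \<le> n"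
  shows "spec_number n (g n) = 2 * n"
proof -
  have "inj_on (point n) (g_essential_sets n)"
    using assms g_essential_sets_subset
    by (intro inj_onI) (simp add: point_eq_iff Int_absorb2)
  then have "card (point n ` g_essential_sets n) = 2 * n"
    using card_g_essential_sets[OF assms] by (simp add: card_image)
  moreover have "point n ` g_essential_sets n \<subseteq> S" if "specifies n S (g n)" for S
  proof
    fix p assume "p \<in> point n ` g_essential_sets n"
    then obtain A where "A \<in> g_essential_sets n" "p = point n A" by blast
    then show "p \<in> S"
      using specifying_set_contains_essential_point[OF that] threshold_fn_flip_g_essential[OF assms]
      by simp
  qed
  ultimately show ?thesis
    using spec_number_eqI[OF specifies_g_essential_points[OF assms]] by simp
qed

lemma depends_on_all_g:
  assumes "3 \<le> n"
  shows "depends_on_all n (g n)"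
  unfolding depends_on_all_def
proof (intro allI impI)
  fix i assume i: "i < n"
  let ?x = "point n {0, if i = 0 then 1 else i}"
  have "?x[i := \<not> ?x ! i] = point n (if i = 0 then {1} else {0})"
    using i by (auto simp: update_point intro: arg_cong[where f = "point n"])
  moreover have "g n ?x" "\<not> g n (point n (if i = 0 then {1} else {0}))"
    using i assms tail_not_subset_singleton[OF assms] by (auto simp: g_point g_set_def)
  ultimately show "\<exists>x\<in>cube n. g n x \<noteq> g n (x[i := \<not> x ! i])"
    by (metis point_in_cube)
qed

lemma g_nonconstant_on_faces:
  assumes "3 \<le> n" "i < n"
  shows "\<exists>x\<in>cube n. \<exists>y\<in>cube n. x ! i = b \<and> y ! i = b \<and> g n x \<noteq> g n y"
proof -
  obtain k where k: "k \<in> {1..<n}" "k \<noteq> i"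
    using tail_not_subset_singleton[OF assms(1)] by blast
  have "g n (point n {..<n}) \<noteq> g n (point n {i})"
    using assms tail_not_subset_singleton[OF assms(1)] by (auto simp: g_point g_set_def)
  moreover have "g n (point n {}) \<noteq> g n (point n ({..<n} - {i}))"
  proof -
    have "k \<in> ({..<n} - {i}) \<inter> {1..<n}"
      using k by auto
    then show ?thesis
      using assms tail_not_subset_singleton[OF assms(1)] by (auto simp: g_point g_set_def)
  qed
  ultimately show ?thesis
    using assms(2) by (cases b) (metis nth_point point_in_cube insertI1 lessThan_iff, 
        metis nth_point point_in_cube empty_iff Diff_iff insertI1)
qed

theorem mainTheorem16:
  fixes n :: nat
  assumes "n \<ge> 3"
  shows "positive_fn n (g n) \<and> g n \<in> H n \<and> depends_on_all n (g n)
         \<and> \<not> lro n (g n) \<and> spec_number n (g n) = 2 * n"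
proof -
  have "\<not> lro n (g n)"
    using assms g_nonconstant_on_faces by (intro not_lro_if_nonconstant_on_faces) auto
  then show ?thesis
    using assms positive_fn_g threshold_fn_g depends_on_all_g spec_number_g by (simp add: H_def)
qed

end
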